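(* Let $T$ be a tree and let $F_1,F_2\in\mathcal S$ be substructures in $T$ sharing a common vertex $v$. Then $v\in X(F_1)$ if and only if $v\in X(F_2)$.
   Context: For a tree $T$, $S(T)$ is the tree obtained from $T$ by subdividing each edge exactly once. Let $\mathcal S=\{S(T): T \text{ a tree}\}$, and for $F=S(T)\in\mathcal S$ set $X(F)=V(T)$ (the non-subdivision vertices, called fixed-degree vertices); in particular $S(P_1)=P_1$ with $X(P_1)=V(P_1)$. A graph $F\in\mathcal S$ is a substructure in a graph $G$ if $F$ is a subgraph of $G$ and $\deg_G(v)=\deg_F(v)$ for every $v\in X(F)$. *)

theory Defs
  imports Main
begin

definition graph :: "'a set \<Rightarrow> 'a set set \<Rightarrow> bool" where
  "graph V E \<longleftrightarrow> finite V \<and> (\<forall>e\<in>E. \<exists>u w. u \<noteq> w \<and> e = {u, w} \<and> u \<in> V \<and> w \<in> V)"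

definition adj :: "'a set set \<Rightarrow> 'a \<Rightarrow> 'a \<Rightarrow> bool" where
  "adj E u w \<longleftrightarrow> u \<noteq> w \<and> {u, w} \<in> E"

definition connected_graph :: "'a set \<Rightarrow> 'a set set \<Rightarrow> bool" where
  "connected_graph V E \<longleftrightarrow> (\<forall>u\<in>V. \<forall>w\<in>V. (u, w) \<in> {(x, y). adj E x y}\<^sup>*)"

definition has_cycle :: "'a set \<Rightarrow> 'a set set \<Rightarrow> bool" where
  "has_cycle V E \<longleftrightarrow> (\<exists>cs. length cs \<ge> 3 \<and> distinct cs \<and> set cs \<subseteq> V \<and>
      (\<forall>i < length cs. adj E (cs ! i) (cs ! ((i + 1) mod length cs))))"

definition tree :: "'a set \<Rightarrow> 'a set set \<Rightarrow> bool" where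
  "tree V E \<longleftrightarrow> graph V E \<and> V \<noteq> {} \<and> connected_graph V E \<and> \<not> has_cycle V E"

definition degree :: "'a set set \<Rightarrow> 'a \<Rightarrow> nat" where
  "degree E v = card {e \<in> E. v \<in> e}"

definition subgraph :: "'a set \<Rightarrow> 'a set set \<Rightarrow> 'a set \<Rightarrow> 'a set set \<Rightarrow> bool" where
  "subgraph VF EF VG EG \<longleftrightarrow> graph VF EF \<and> VF \<subseteq> VG \<and> EF \<subseteq> EG"

text \<open>(VF, EF) is (a copy of) S(T) for a tree T with vertex set X = X(F): each edge e of T
  is replaced by a new subdivision vertex m e adjacent to both ends of e.\<close>

definition subdivided_tree :: "'a set \<Rightarrow> 'a set set \<Rightarrow> 'a set \<Rightarrow> bool" where
  "subdivided_tree VF EF X \<longleftrightarrow> (\<exists>ET m. tree X ET \<and> inj_on m ET \<and> m ` ET \<inter> X = {} \<and>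
      VF = X \<union> m ` ET \<and> EF = {{x, m e} | x e. e \<in> ET \<and> x \<in> e})"

definition substructure :: "'a set \<Rightarrow> 'a set set \<Rightarrow> 'a set \<Rightarrow> 'a set \<Rightarrow> 'a set set \<Rightarrow> bool" where
  "substructure VF EF X VG EG \<longleftrightarrow> subdivided_tree VF EF X \<and> subgraph VF EF VG EG \<and>
      (\<forall>v\<in>X. degree EG v = degree EF v)"

end

theory Submission
  imports Defs
begin

text \<open>Call a vertex mismatched if it is a fixed-degree vertex of one substructure and a subdivision
  vertex of the other. A fixed-degree vertex keeps all its edges of the host tree, and these lead to
  subdivision vertices; a subdivision vertex has two neighbours, both of fixed degree. Hence every
  mismatched vertex has two mismatched neighbours, so a mismatched vertex would force a cycle in
  the tree.\<close>

lemma adj_sym: "adj E u w \<Longrightarrow> adj E w u"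
  unfolding adj_def by (auto simp: insert_commute)

lemma has_cycle_mono: "has_cycle A E \<Longrightarrow> A \<subseteq> B \<Longrightarrow> has_cycle B E"
  unfolding has_cycle_def by blast

lemma graph_finite_edges:
  assumes "graph V E" shows "finite E"
proof (rule finite_subset)
  show "E \<subseteq> Pow V" using assms unfolding graph_def by fastforce
  show "finite (Pow V)" using assms by (simp add: graph_def)
qed

definition adj_path :: "'a set set \<Rightarrow> 'a list \<Rightarrow> bool" where
  "adj_path E xs \<longleftrightarrow> distinct xs \<and> (\<forall>i. Suc i < length xs \<longrightarrow> adj E (xs ! i) (xs ! Suc i))"

lemma adj_path_Cons:
  assumes "adj_path E xs" "xs \<noteq> []" "adj E w (hd xs)" "w \<notin> set xs"
  shows "adj_path E (w # xs)"
  unfolding adj_path_def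
proof (intro conjI allI impI)
  show "distinct (w # xs)" using assms(1,4) by (simp add: adj_path_def)
  fix i assume "Suc i < length (w # xs)"
  then show "adj E ((w # xs) ! i) ((w # xs) ! Suc i)"
    using assms(1-3) by (cases i) (auto simp: adj_path_def hd_conv_nth)
qed

lemma adj_path_chord_imp_has_cycle:
  assumes path: "adj_path E xs" and j: "2 \<le> j" "j < length xs"
    and chord: "adj E (xs ! j) (xs ! 0)"
  shows "has_cycle (set xs) E"
  unfolding has_cycle_def
proof (intro exI conjI allI impI)
  let ?cs = "take (Suc j) xs"
  have len: "length ?cs = Suc j" using j by simp
  show "3 \<le> length ?cs" "distinct ?cs" "set ?cs \<subseteq> set xs"
    using len j path by (auto simp: adj_path_def dest: in_set_takeD)
  fix i assume "i < length ?cs"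
  then consider "i = j" | "i < j" using len by linarith
  then show "adj E (?cs ! i) (?cs ! ((i + 1) mod length ?cs))"
  proof cases
    case 1
    then show ?thesis using len chord by simp
  next
    case 2
    then show ?thesis using len j path by (simp add: adj_path_def)
  qed
qed

lemma longest_adj_path_exists:
  assumes "finite B" "b \<in> B"
  obtains xs where "adj_path E xs" "xs \<noteq> []" "set xs \<subseteq> B"
    and "\<And>ys. adj_path E ys \<Longrightarrow> set ys \<subseteq> B \<Longrightarrow> length ys \<le> length xs"
proof -
  let ?P = "\<lambda>xs. adj_path E xs \<and> set xs \<subseteq> B"
  have "?P [b]" using assms(2) by (simp add: adj_path_def)
  moreover have "length ys < card B + 1" if "?P ys" for ys
    using that assms(1) by (metis adj_path_def card_mono distinct_card less_Suc_eq_le Suc_eq_plus1)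
  ultimately obtain xs where "?P xs" "\<And>ys. ?P ys \<Longrightarrow> length ys \<le> length xs"
    using ex_has_greatest_nat[of ?P "[b]" length "card B + 1"] by blast
  moreover from this have "xs \<noteq> []" using \<open>?P [b]\<close> by fastforce
  ultimately show ?thesis using that by blast
qed

text \<open>The head of a longest path has all its neighbours on the path, at most one of them
  right next to it; any other one closes a cycle.\<close>

lemma min_degree_two_imp_has_cycle:
  assumes "finite B" "B \<noteq> {}"
    and two_nbrs: "\<forall>u\<in>B. \<exists>w1 w2. w1 \<noteq> w2 \<and> w1 \<in> B \<and> w2 \<in> B \<and> adj E u w1 \<and> adj E u w2"
  shows "has_cycle B E"
proof -
  obtain b where "b \<in> B" using assms(2) by blast
  then obtain xs where path: "adj_path E xs" "xs \<noteq> []" "set xs \<subseteq> B"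
    and longest: "\<And>ys. adj_path E ys \<Longrightarrow> set ys \<subseteq> B \<Longrightarrow> length ys \<le> length xs"
    using longest_adj_path_exists[OF assms(1)] by metis
  let ?u = "xs ! 0"
  have on_path: "w \<in> set xs" if "w \<in> B" "adj E ?u w" for w
  proof (rule ccontr)
    assume "w \<notin> set xs"
    then have "adj_path E (w # xs)"
      using adj_path_Cons[OF path(1,2)] adj_sym[OF that(2)] path(2) by (simp add: hd_conv_nth)
    then show False using longest[of "w # xs"] that(1) path(3) by simp
  qed
  have "?u \<in> B" using path(2,3) by (simp add: nth_mem subsetD)
  then obtain w1 w2 where w: "w1 \<noteq> w2" "w1 \<in> B" "w2 \<in> B" "adj E ?u w1" "adj E ?u w2"
    using two_nbrs by blast
  have "w1 \<in> set xs" "w2 \<in> set xs" using on_path w by simp_all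
  then obtain j1 j2 where j: "j1 < length xs" "xs ! j1 = w1" "j2 < length xs" "xs ! j2 = w2"
    by (auto simp: in_set_conv_nth)
  have "xs ! j1 \<noteq> ?u" "xs ! j2 \<noteq> ?u" "xs ! j1 \<noteq> xs ! j2" using w j by (auto simp: adj_def)
  then have "j1 \<noteq> 0" "j2 \<noteq> 0" "j1 \<noteq> j2" by (cases j1; cases j2; auto)+
  then obtain j where "j \<in> {j1, j2}" "2 \<le> j" by (metis insertCI less_2_cases not_le)
  then have "2 \<le> j" "j < length xs" "adj E (xs ! j) ?u" using j w adj_sym by auto
  then have "has_cycle (set xs) E"
    by (rule adj_path_chord_imp_has_cycle[OF path(1)])
  then show ?thesis using path(3) by (rule has_cycle_mono)
qed

lemma subdivided_tree_neighbour_of_fixed: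
  assumes "subdivided_tree VF EF X" "x \<in> X" "{x, w} \<in> EF"
  shows "w \<in> VF - X"
proof -
  obtain ET m where disj: "m ` ET \<inter> X = {}" and VF: "VF = X \<union> m ` ET"
    and EF: "EF = {{x, m e} | x e. e \<in> ET \<and> x \<in> e}"
    using assms(1) unfolding subdivided_tree_def by blast
  obtain y e where ye: "{x, w} = {y, m e}" "e \<in> ET" using assms(3) EF by blast
  then have "m e \<notin> X" using disj by blast
  then have "w = m e" using ye(1) assms(2) by (auto simp: doubleton_eq_iff)
  then show ?thesis using \<open>m e \<notin> X\<close> VF ye(2) by blast
qed

lemma subdivided_tree_neighbours_of_subdivision:
  assumes "subdivided_tree VF EF X" "u \<in> VF - X"
  shows "\<exists>w1 w2. w1 \<noteq> w2 \<and> w1 \<in> X \<and> w2 \<in> X \<and> {u, w1} \<in> EF \<and> {u, w2} \<in> EF"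
proof -
  obtain ET m where T: "tree X ET" and VF: "VF = X \<union> m ` ET"
    and EF: "EF = {{x, m e} | x e. e \<in> ET \<and> x \<in> e}"
    using assms(1) unfolding subdivided_tree_def by blast
  obtain e where e: "e \<in> ET" "u = m e" using assms(2) VF by blast
  obtain a b where "a \<noteq> b" "e = {a, b}" "a \<in> X" "b \<in> X"
    using T e(1) unfolding tree_def graph_def by blast
  moreover have "{u, a} \<in> EF" "{u, b} \<in> EF"
    using EF e \<open>e = {a, b}\<close> by (auto simp: insert_commute)
  ultimately show ?thesis by blast
qed

lemma substructure_keeps_edges_at_fixed:
  assumes "substructure VF EF X V E" "finite E" "x \<in> X" "e \<in> E" "x \<in> e"
  shows "e \<in> EF"
proof -
  have "EF \<subseteq> E" using assms(1) by (simp add: substructure_def subgraph_def)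
  then have "{e \<in> EF. x \<in> e} \<subseteq> {e \<in> E. x \<in> e}" by blast
  moreover have "card {e \<in> EF. x \<in> e} = card {e \<in> E. x \<in> e}"
    using assms(1,3) by (simp add: substructure_def degree_def)
  ultimately have "{e \<in> EF. x \<in> e} = {e \<in> E. x \<in> e}"
    using assms(2) by (simp add: card_subset_eq)
  then show ?thesis using assms(4,5) by blast
qed

lemma mismatched_vertex_neighbours:
  assumes S1: "substructure VF1 EF1 X1 V E" and S2: "substructure VF2 EF2 X2 V E"
    and "finite E" and u: "u \<in> X1 \<inter> (VF2 - X2)"
  shows "\<exists>w1 w2. w1 \<noteq> w2 \<and> w1 \<in> X2 \<inter> (VF1 - X1) \<and> w2 \<in> X2 \<inter> (VF1 - X1) \<and>
    adj E u w1 \<and> adj E u w2"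
proof -
  have T1: "subdivided_tree VF1 EF1 X1" and T2: "subdivided_tree VF2 EF2 X2"
    and "EF2 \<subseteq> E" using S1 S2 by (auto simp: substructure_def subgraph_def)
  obtain w1 w2 where w: "w1 \<noteq> w2" "w1 \<in> X2" "w2 \<in> X2" "{u, w1} \<in> EF2" "{u, w2} \<in> EF2"
    using subdivided_tree_neighbours_of_subdivision[OF T2] u by blast
  then have "{u, w1} \<in> EF1" "{u, w2} \<in> EF1"
    using substructure_keeps_edges_at_fixed[OF S1 \<open>finite E\<close>] u \<open>EF2 \<subseteq> E\<close> by auto
  then have "w1 \<in> VF1 - X1" "w2 \<in> VF1 - X1"
    using subdivided_tree_neighbour_of_fixed[OF T1] u by auto
  moreover have "u \<noteq> w1" "u \<noteq> w2" using w u by auto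
  ultimately show ?thesis using w \<open>EF2 \<subseteq> E\<close> by (auto simp: adj_def)
qed

theorem proposition4p4:
  fixes V :: "'a set" and E :: "'a set set"
  assumes "tree V E"
    and "substructure VF1 EF1 X1 V E"
    and "substructure VF2 EF2 X2 V E"
    and "v \<in> VF1" and "v \<in> VF2"
  shows "v \<in> X1 \<longleftrightarrow> v \<in> X2"
proof (rule ccontr)
  assume "\<not> (v \<in> X1 \<longleftrightarrow> v \<in> X2)"
  define B where "B = X1 \<inter> (VF2 - X2) \<union> X2 \<inter> (VF1 - X1)"
  have "finite V" "finite E" using assms(1) graph_finite_edges by (auto simp: tree_def graph_def)
  have "B \<subseteq> V"
    using assms(2,3) unfolding B_def substructure_def subgraph_def by blast
  then have "finite B" using \<open>finite V\<close> by (rule finite_subset)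
  moreover have "B \<noteq> {}" using \<open>\<not> (v \<in> X1 \<longleftrightarrow> v \<in> X2)\<close> assms(4,5) by (auto simp: B_def)
  moreover have "\<forall>u\<in>B. \<exists>w1 w2. w1 \<noteq> w2 \<and> w1 \<in> B \<and> w2 \<in> B \<and> adj E u w1 \<and> adj E u w2"
    using mismatched_vertex_neighbours[OF assms(2,3) \<open>finite E\<close>]
      mismatched_vertex_neighbours[OF assms(3,2) \<open>finite E\<close>]
    unfolding B_def by blast
  ultimately have "has_cycle B E" by (rule min_degree_two_imp_has_cycle)
  then have "has_cycle V E" using \<open>B \<subseteq> V\<close> by (rule has_cycle_mono)
  then show False using assms(1) by (simp add: tree_def)
qed

end
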